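(* If a formula $A$ is derivable in the axiom system of $\mathbb{PCL}$ or of one of its extensions $\mathbb{PS}$ ($S$ a string among N, T, W, C, U, NU, TU, WU, CU, A, NA, TA, WA, CA), then for any world label $x$ the sequent $\Rightarrow x:A$ is derivable in the corresponding calculus $\mathsf{CL}$, respectively $\mathsf{CL}^S$.
   Context: Formulas $\mathcal{L}::=p\mid\bot\mid A\wedge B\mid A\lor B\mid A\to B\mid A>B$, $\neg A:=A\to\bot$, $\top:=\neg\bot$. Axiom systems: $\mathbb{PCL}$ = classical propositional logic + (RCEA) from $A\leftrightarrow B$ infer $(A>C)\leftrightarrow(B>C)$; (RCK) from $A\to B$ infer $(C>A)\to(C>B)$; (ID) $A>A$; (R-And) $(A>B)\wedge(A>C)\to(A>(B\wedge C))$; (CM) $(A>B)\wedge(A>C)\to((A\wedge B)>C)$; (OR) $(A>C)\wedge(B>C)\to((A\lor B)>C)$. (N) $\neg(\top>\bot)$; (T) $A\to\neg(A>\bot)$; (W) $(A>B)\to(A\to B)$; (C) $(A\wedge B)\to(A>B)$; (U$_1$) $(\neg A>\bot)\to(\neg(\neg A>\bot)>\bot)$; (U$_2$) $\neg(A>\bot)\to((A>\bot)>\bot)$; (A$_1$) $(A>B)\to(C>(A>B))$; (A$_2$) $\neg(A>B)\to(C>\neg(A>B))$. $\mathbb{PN}=\mathbb{PCL}+$(N), $\mathbb{PT}=\mathbb{PN}+$(T), $\mathbb{PW}=\mathbb{PT}+$(W), $\mathbb{PC}=\mathbb{PW}+$(C); $\mathbb{PU}=\mathbb{PCL}+$(U$_1$),(U$_2$),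 $\mathbb{PNU},\dots,\mathbb{PCU}$ add (N); (N),(T); etc. to $\mathbb{PU}$; $\mathbb{PA}=\mathbb{PCL}+$(A$_1$),(A$_2$), $\mathbb{PNA},\dots,\mathbb{PCA}$ analogously. Sequent calculi: world labels $x,y,\dots$; neighbourhood labels $a,b,\dots$ incl. $\{x\}$. Relational atoms $a\in N(x)$, $x\in a$, $a\subseteq b$; labelled formulas: these, $x:A$, $a\Vdash^\exists A$, $a\Vdash^\forall A$, $x\Vdash_aA|B$. Sequents: multisets, relational atoms only on the left. Rules of $\mathsf{CL}$ (premisses / conclusion; "(u!)": $u$ fresh): initial $x:p,\Gamma\Rightarrow\Delta,x:p$ ($p$ atomic), $x:\bot,\Gamma\Rightarrow\Delta$; G3 rules for $\wedge,\vee,\to$; L$\forall$: $x:A,x\in a,a\Vdash^\forall A,\Gamma\Rightarrow\Delta$ / $x\in a,a\Vdash^\forall A,\Gamma\Rightarrow\Delta$; R$\forall$(x!): $x\in a,\Gamma\Rightarrow\Delta,x:A$ / $\Gamma\Rightarrow\Delta,a\Vdash^\forall A$; L$\exists$(x!): $x\in a,x:A,\Gamma\Rightarrow\Delta$ / $a\Vdash^\exists A,\Gamma\Rightarrow\Delta$; R$\exists$: $x\in a,\Gamma\Rightarrow\Delta,x:A,a\Vdash^\exists A$ / $x\in a,\Gamma\Rightarrow\Delta,a\Vdash^\exists A$; R$>$(a!): $a\in N(x),a\Vdash^\exists A,\Gamma\Rightarrow\Delta,x\Vdash_aA|B$ / $\Gamma\Rightarrow\Delta,x:A>B$; L$>$: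 $a\in N(x),x:A>B,\Gamma\Rightarrow\Delta,a\Vdash^\exists A$ and $x\Vdash_aA|B,a\in N(x),x:A>B,\Gamma\Rightarrow\Delta$ / $a\in N(x),x:A>B,\Gamma\Rightarrow\Delta$; R$|$: $c\in N(x),c\subseteq a,\Gamma\Rightarrow\Delta,x\Vdash_aA|B,c\Vdash^\exists A$ and $c\in N(x),c\subseteq a,\Gamma\Rightarrow\Delta,x\Vdash_aA|B,c\Vdash^\forall A\to B$ / $c\in N(x),c\subseteq a,\Gamma\Rightarrow\Delta,x\Vdash_aA|B$; L$|$(c!): $c\in N(x),c\subseteq a,c\Vdash^\exists A,c\Vdash^\forall A\to B,\Gamma\Rightarrow\Delta$ / $x\Vdash_aA|B,\Gamma\Rightarrow\Delta$; Ref: $a\subseteq a,\Gamma\Rightarrow\Delta$ / $\Gamma\Rightarrow\Delta$; Tr: $c\subseteq a,c\subseteq b,b\subseteq a,\Gamma\Rightarrow\Delta$ / $c\subseteq b,b\subseteq a,\Gamma\Rightarrow\Delta$; L$\subseteq$: $x\in a,a\subseteq b,x\in b,\Gamma\Rightarrow\Delta$ / $x\in a,a\subseteq b,\Gamma\Rightarrow\Delta$. Extension rules: N(a!): $a\in N(x),\Gamma\Rightarrow\Delta$ / $\Gamma\Rightarrow\Delta$; 0(y!): $y\in a,a\in N(x),\Gamma\Rightarrow\Delta$ / $a\in N(x),\Gamma\Rightarrow\Delta$; T(a!): $x\in a,a\in N(x),\Gamma\Rightarrow\Delta$ / $\Gamma\Rightarrow\Delta$; W: $x\in a,a\in N(x),\Gamma\Rightarrow\Delta$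 / $a\in N(x),\Gamma\Rightarrow\Delta$; Single: $x\in\{x\},\{x\}\in N(x),\Gamma\Rightarrow\Delta$ / $\{x\}\in N(x),\Gamma\Rightarrow\Delta$; C: $\{x\}\in N(x),\{x\}\subseteq a,a\in N(x),\Gamma\Rightarrow\Delta$ / $a\in N(x),\Gamma\Rightarrow\Delta$; Repl$_1$: $y\in\{x\},At(x),At(y),\Gamma\Rightarrow\Delta$ / $y\in\{x\},At(x),\Gamma\Rightarrow\Delta$; Repl$_2$: same premiss / $y\in\{x\},At(y),\Gamma\Rightarrow\Delta$ ($At(x)$ among $x:P$, $P$ atomic, $x\in a$, $a\in N(x)$, $x\in\{z\}$); U$_1$(c!): $z\in c,c\in N(x),a\in N(x),y\in a,b\in N(y),z\in b,\Gamma\Rightarrow\Delta$ / $a\in N(x),y\in a,b\in N(y),z\in b,\Gamma\Rightarrow\Delta$; U$_2$(c!): $z\in c,c\in N(y),a\in N(x),y\in a,b\in N(x),z\in b,\Gamma\Rightarrow\Delta$ / $a\in N(x),y\in a,b\in N(x),z\in b,\Gamma\Rightarrow\Delta$; A$_1$: $b\in N(y),a\in N(x),y\in a,b\in N(x),\Gamma\Rightarrow\Delta$ / $a\in N(x),y\in a,b\in N(x),\Gamma\Rightarrow\Delta$; A$_2$: $b\in N(x),a\in N(x),y\in a,b\in N(y),\Gamma\Rightarrow\Delta$ / $a\in N(x),y\in a,b\in N(y),\Gamma\Rightarrow\Delta$; plus contracted instances of U$_1$,U$_2$,A$_1$. Calculi: $\mathsf{CL}^N=\mathsf{CL}+$N,0;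 $\mathsf{CL}^T=\mathsf{CL}^N+$T; $\mathsf{CL}^W=\mathsf{CL}^T+$W; $\mathsf{CL}^C=\mathsf{CL}^W+$C,Single,Repl$_1$,Repl$_2$; $\mathsf{CL}^U=\mathsf{CL}+$U$_1$,U$_2$; $\mathsf{CL}^{NU},\dots,\mathsf{CL}^{CU}$ = $\mathsf{CL}^N,\dots,\mathsf{CL}^C$ + U$_1$,U$_2$; $\mathsf{CL}^A=\mathsf{CL}+$A$_1$,A$_2$; $\mathsf{CL}^{NA},\dots,\mathsf{CL}^{CA}$ = $\mathsf{CL}^N,\dots,\mathsf{CL}^C$ + A$_1$,A$_2$. *)

theory Defs
  imports Main "HOL-Library.Multiset"
begin

datatype form =
    Atom nat
  | Bot
  | And form form
  | Or form form
  | Imp form form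
  | Cond form form

definition Neg :: "form \<Rightarrow> form" where "Neg A = Imp A Bot"
definition Top :: form where "Top = Neg Bot"
definition Iff :: "form \<Rightarrow> form \<Rightarrow> form" where "Iff A B = And (Imp A B) (Imp B A)"

fun peval :: "(form \<Rightarrow> bool) \<Rightarrow> form \<Rightarrow> bool" where
  "peval v (Atom p) = v (Atom p)"
| "peval v Bot = False"
| "peval v (And A B) = (peval v A \<and> peval v B)"
| "peval v (Or A B) = (peval v A \<or> peval v B)"
| "peval v (Imp A B) = (peval v A \<longrightarrow> peval v B)"
| "peval v (Cond A B) = v (Cond A B)"

definition taut :: "form \<Rightarrow> bool" where
  "taut A \<longleftrightarrow> (\<forall>v. peval v A)"

datatype logic = PCL | PN | PT | PW | PC | PU | PNU | PTU | PWU | PCU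
               | PA | PNA | PTA | PWA | PCA

definition hasN :: "logic \<Rightarrow> bool" where
  "hasN L \<longleftrightarrow> L \<in> {PN, PT, PW, PC, PNU, PTU, PWU, PCU, PNA, PTA, PWA, PCA}"
definition hasT :: "logic \<Rightarrow> bool" where
  "hasT L \<longleftrightarrow> L \<in> {PT, PW, PC, PTU, PWU, PCU, PTA, PWA, PCA}"
definition hasW :: "logic \<Rightarrow> bool" where
  "hasW L \<longleftrightarrow> L \<in> {PW, PC, PWU, PCU, PWA, PCA}"
definition hasC :: "logic \<Rightarrow> bool" where
  "hasC L \<longleftrightarrow> L \<in> {PC, PCU, PCA}"
definition hasU :: "logic \<Rightarrow> bool" where
  "hasU L \<longleftrightarrow> L \<in> {PU, PNU, PTU, PWU, PCU}"
definition hasA :: "logic \<Rightarrow> bool" where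
  "hasA L \<longleftrightarrow> L \<in> {PA, PNA, PTA, PWA, PCA}"

text \<open>Hilbert-style derivability: classical propositional logic is given by
  all (substitution instances of) tautologies plus modus ponens.\<close>
inductive hderiv :: "logic \<Rightarrow> form \<Rightarrow> bool" where
  Taut: "taut A \<Longrightarrow> hderiv L A"
| MP: "hderiv L (Imp A B) \<Longrightarrow> hderiv L A \<Longrightarrow> hderiv L B"
| RCEA: "hderiv L (Iff A B) \<Longrightarrow> hderiv L (Iff (Cond A C) (Cond B C))"
| RCK: "hderiv L (Imp A B) \<Longrightarrow> hderiv L (Imp (Cond C A) (Cond C B))"
| ID: "hderiv L (Cond A A)"
| RAnd: "hderiv L (Imp (And (Cond A B) (Cond A C)) (Cond A (And B C)))"
| CM: "hderiv L (Imp (And (Cond A B) (Cond A C)) (Cond (And A B) C))"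
| OR: "hderiv L (Imp (And (Cond A C) (Cond B C)) (Cond (Or A B) C))"
| AxN: "hasN L \<Longrightarrow> hderiv L (Neg (Cond Top Bot))"
| AxT: "hasT L \<Longrightarrow> hderiv L (Imp A (Neg (Cond A Bot)))"
| AxW: "hasW L \<Longrightarrow> hderiv L (Imp (Cond A B) (Imp A B))"
| AxC: "hasC L \<Longrightarrow> hderiv L (Imp (And A B) (Cond A B))"
| AxU1: "hasU L \<Longrightarrow>
    hderiv L (Imp (Cond (Neg A) Bot) (Cond (Neg (Cond (Neg A) Bot)) Bot))"
| AxU2: "hasU L \<Longrightarrow> hderiv L (Imp (Neg (Cond A Bot)) (Cond (Cond A Bot) Bot))"
| AxA1: "hasA L \<Longrightarrow> hderiv L (Imp (Cond A B) (Cond C (Cond A B)))"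
| AxA2: "hasA L \<Longrightarrow> hderiv L (Imp (Neg (Cond A B)) (Cond C (Neg (Cond A B))))"

type_synonym wlabel = nat

text \<open>Neighbourhood labels: variables a, b, ... and singleton labels {x}.\<close>
datatype nlabel = NV nat | Sg wlabel

datatype lform =
    InN nlabel wlabel              (* a \<in> N(x) *)
  | Mem wlabel nlabel
  | Sub nlabel nlabel
  | Lab wlabel form                (* x : A *)
  | FEx nlabel form                (* a \<Vdash>\<exists> A *)
  | FAll nlabel form               (* a \<Vdash>\<forall> A *)
  | CondL wlabel nlabel form form  (* x \<Vdash>_a A|B *)

fun wl_nl :: "nlabel \<Rightarrow> wlabel set" where
  "wl_nl (NV n) = {}" | "wl_nl (Sg x) = {x}"
fun nv_nl :: "nlabel \<Rightarrow> nat set" where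
  "nv_nl (NV n) = {n}" | "nv_nl (Sg x) = {}"

fun wl_lf :: "lform \<Rightarrow> wlabel set" where
  "wl_lf (InN a x) = wl_nl a \<union> {x}"
| "wl_lf (Mem x a) = {x} \<union> wl_nl a"
| "wl_lf (Sub a b) = wl_nl a \<union> wl_nl b"
| "wl_lf (Lab x A) = {x}"
| "wl_lf (FEx a A) = wl_nl a"
| "wl_lf (FAll a A) = wl_nl a"
| "wl_lf (CondL x a A B) = {x} \<union> wl_nl a"

fun nv_lf :: "lform \<Rightarrow> nat set" where
  "nv_lf (InN a x) = nv_nl a"
| "nv_lf (Mem x a) = nv_nl a"
| "nv_lf (Sub a b) = nv_nl a \<union> nv_nl b"
| "nv_lf (Lab x A) = {}"
| "nv_lf (FEx a A) = nv_nl a"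
| "nv_lf (FAll a A) = nv_nl a"
| "nv_lf (CondL x a A B) = nv_nl a"

definition wl_seq :: "lform multiset \<Rightarrow> lform multiset \<Rightarrow> wlabel set" where
  "wl_seq G D = (\<Union>F \<in> set_mset G \<union> set_mset D. wl_lf F)"
definition nv_seq :: "lform multiset \<Rightarrow> lform multiset \<Rightarrow> nat set" where
  "nv_seq G D = (\<Union>F \<in> set_mset G \<union> set_mset D. nv_lf F)"

text \<open>Atoms At(x) for the replacement rules: x:P (P atomic), x \<in> a, a \<in> N(x),
  x \<in> {z}; the distinguished position of x is filled by the given world label.\<close>
datatype atkind = AkLab nat | AkMem nlabel | AkInN nlabel | AkSg wlabel

fun At :: "atkind \<Rightarrow> wlabel \<Rightarrow> lform" where
  "At (AkLab p) x = Lab x (Atom p)"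
| "At (AkMem a) x = Mem x a"
| "At (AkInN a) x = InN a x"
| "At (AkSg z) x = Mem x (Sg z)"

text \<open>deriv L G D: the sequent G \<Rightarrow> D is derivable in the calculus
  corresponding to L (CL for PCL, CL^S for PS). Freshness (u!) means that u does
  not occur in the conclusion.\<close>
inductive deriv :: "logic \<Rightarrow> lform multiset \<Rightarrow> lform multiset \<Rightarrow> bool" where
  Init: "deriv L (add_mset (Lab x (Atom p)) G) (add_mset (Lab x (Atom p)) D)"
| LBot: "deriv L (add_mset (Lab x Bot) G) D"
| LAnd: "deriv L ({#Lab x A, Lab x B#} + G) D \<Longrightarrow>
         deriv L (add_mset (Lab x (And A B)) G) D"
| RAnd: "deriv L G (add_mset (Lab x A) D) \<Longrightarrow> deriv L G (add_mset (Lab x B) D) \<Longrightarrow>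
         deriv L G (add_mset (Lab x (And A B)) D)"
| LOr: "deriv L (add_mset (Lab x A) G) D \<Longrightarrow> deriv L (add_mset (Lab x B) G) D \<Longrightarrow>
        deriv L (add_mset (Lab x (Or A B)) G) D"
| ROr: "deriv L G ({#Lab x A, Lab x B#} + D) \<Longrightarrow>
        deriv L G (add_mset (Lab x (Or A B)) D)"
| LImp: "deriv L G (add_mset (Lab x A) D) \<Longrightarrow> deriv L (add_mset (Lab x B) G) D \<Longrightarrow>
         deriv L (add_mset (Lab x (Imp A B)) G) D"
| RImp: "deriv L (add_mset (Lab x A) G) (add_mset (Lab x B) D) \<Longrightarrow>
         deriv L G (add_mset (Lab x (Imp A B)) D)"
| LAll: "deriv L ({#Lab x A, Mem x a, FAll a A#} + G) D \<Longrightarrow>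
         deriv L ({#Mem x a, FAll a A#} + G) D"
| RAll: "x \<notin> wl_seq G (add_mset (FAll a A) D) \<Longrightarrow>
         deriv L (add_mset (Mem x a) G) (add_mset (Lab x A) D) \<Longrightarrow>
         deriv L G (add_mset (FAll a A) D)"
| LEx: "x \<notin> wl_seq (add_mset (FEx a A) G) D \<Longrightarrow>
        deriv L ({#Mem x a, Lab x A#} + G) D \<Longrightarrow>
        deriv L (add_mset (FEx a A) G) D"
| REx: "deriv L (add_mset (Mem x a) G) ({#Lab x A, FEx a A#} + D) \<Longrightarrow>
        deriv L (add_mset (Mem x a) G) (add_mset (FEx a A) D)"
| RCond: "n \<notin> nv_seq G (add_mset (Lab x (Cond A B)) D) \<Longrightarrow>
          deriv L ({#InN (NV n) x, FEx (NV n) A#} + G) (add_mset (CondL x (NV n) A B) D) \<Longrightarrow>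
          deriv L G (add_mset (Lab x (Cond A B)) D)"
| LCond: "deriv L ({#InN a x, Lab x (Cond A B)#} + G) (add_mset (FEx a A) D) \<Longrightarrow>
          deriv L ({#CondL x a A B, InN a x, Lab x (Cond A B)#} + G) D \<Longrightarrow>
          deriv L ({#InN a x, Lab x (Cond A B)#} + G) D"
| RBar: "deriv L ({#InN c x, Sub c a#} + G) ({#CondL x a A B, FEx c A#} + D) \<Longrightarrow>
         deriv L ({#InN c x, Sub c a#} + G) ({#CondL x a A B, FAll c (Imp A B)#} + D) \<Longrightarrow>
         deriv L ({#InN c x, Sub c a#} + G) (add_mset (CondL x a A B) D)"
| LBar: "n \<notin> nv_seq (add_mset (CondL x a A B) G) D \<Longrightarrow>
         deriv L ({#InN (NV n) x, Sub (NV n) a, FEx (NV n) A, FAll (NV n) (Imp A B)#} + G) D \<Longrightarrow>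
         deriv L (add_mset (CondL x a A B) G) D"
| Ref: "deriv L (add_mset (Sub a a) G) D \<Longrightarrow> deriv L G D"
| Tr: "deriv L ({#Sub c a, Sub c b, Sub b a#} + G) D \<Longrightarrow>
       deriv L ({#Sub c b, Sub b a#} + G) D"
| LSub: "deriv L ({#Mem x a, Sub a b, Mem x b#} + G) D \<Longrightarrow>
         deriv L ({#Mem x a, Sub a b#} + G) D"
| RuleN: "hasN L \<Longrightarrow> n \<notin> nv_seq G D \<Longrightarrow>
          deriv L (add_mset (InN (NV n) x) G) D \<Longrightarrow> deriv L G D"
| Rule0: "hasN L \<Longrightarrow> y \<notin> wl_seq (add_mset (InN a x) G) D \<Longrightarrow>
          deriv L ({#Mem y a, InN a x#} + G) D \<Longrightarrow> deriv L (add_mset (InN a x) G) D"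
| RuleT: "hasT L \<Longrightarrow> n \<notin> nv_seq G D \<Longrightarrow>
          deriv L ({#Mem x (NV n), InN (NV n) x#} + G) D \<Longrightarrow> deriv L G D"
| RuleW: "hasW L \<Longrightarrow> deriv L ({#Mem x a, InN a x#} + G) D \<Longrightarrow>
          deriv L (add_mset (InN a x) G) D"
| Single: "hasC L \<Longrightarrow> deriv L ({#Mem x (Sg x), InN (Sg x) x#} + G) D \<Longrightarrow>
           deriv L (add_mset (InN (Sg x) x) G) D"
| RuleC: "hasC L \<Longrightarrow> deriv L ({#InN (Sg x) x, Sub (Sg x) a, InN a x#} + G) D \<Longrightarrow>
          deriv L (add_mset (InN a x) G) D"
| Repl1: "hasC L \<Longrightarrow> deriv L ({#Mem y (Sg x), At k x, At k y#} + G) D \<Longrightarrow>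
          deriv L ({#Mem y (Sg x), At k x#} + G) D"
| Repl2: "hasC L \<Longrightarrow> deriv L ({#Mem y (Sg x), At k x, At k y#} + G) D \<Longrightarrow>
          deriv L ({#Mem y (Sg x), At k y#} + G) D"
(* U1, U2, A1 together with their contracted instances: the principal atoms of
   the conclusion need only occur (as a set) in the antecedent *)
| RuleU1: "hasU L \<Longrightarrow> n \<notin> nv_seq G D \<Longrightarrow>
           {InN a x, Mem y a, InN b y, Mem z b} \<subseteq> set_mset G \<Longrightarrow>
           deriv L ({#Mem z (NV n), InN (NV n) x#} + G) D \<Longrightarrow> deriv L G D"
| RuleU2: "hasU L \<Longrightarrow> n \<notin> nv_seq G D \<Longrightarrow>
           {InN a x, Mem y a, InN b x, Mem z b} \<subseteq> set_mset G \<Longrightarrow>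
           deriv L ({#Mem z (NV n), InN (NV n) y#} + G) D \<Longrightarrow> deriv L G D"
| RuleA1: "hasA L \<Longrightarrow> {InN a x, Mem y a, InN b x} \<subseteq> set_mset G \<Longrightarrow>
           deriv L (add_mset (InN b y) G) D \<Longrightarrow> deriv L G D"
| RuleA2: "hasA L \<Longrightarrow>
           deriv L ({#InN b x, InN a x, Mem y a, InN b y#} + G) D \<Longrightarrow>
           deriv L ({#InN a x, Mem y a, InN b y#} + G) D"

end

theory Submission
  imports Defs "HOL-Library.Countable"
begin

(* The theorem is proved semantically.  Every axiom and rule of the Hilbert system for L is sound
   for neighbourhood models satisfying the frame conditions of L.  Conversely, if the sequent
   => x:A is not derivable in the labelled calculus, a fair proof search that applies every rule
   instance infinitely often, always continuing with an underivable premiss, never closes; the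
   union of the antecedents and of the succedents along this branch describes a model of L in
   which every world-labelled formula of the antecedents holds and every one of the succedents
   fails, so A is refuted at x. *)

section \<open>Neighbourhood semantics\<close>

fun holds :: "('w \<Rightarrow> nat \<Rightarrow> bool) \<Rightarrow> ('w \<Rightarrow> 'n set) \<Rightarrow> ('n \<Rightarrow> 'w set) \<Rightarrow>
    ('n \<Rightarrow> 'n \<Rightarrow> bool) \<Rightarrow> 'w \<Rightarrow> form \<Rightarrow> bool" where
  "holds V N E R w (Atom p) = V w p"
| "holds V N E R w Bot = False"
| "holds V N E R w (And A B) = (holds V N E R w A \<and> holds V N E R w B)"
| "holds V N E R w (Or A B) = (holds V N E R w A \<or> holds V N E R w B)"
| "holds V N E R w (Imp A B) = (holds V N E R w A \<longrightarrow> holds V N E R w B)"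
| "holds V N E R w (Cond A B) = (\<forall>a\<in>N w. (\<exists>y\<in>E a. holds V N E R y A) \<longrightarrow>
      (\<exists>c\<in>N w. R c a \<and> (\<exists>y\<in>E c. holds V N E R y A) \<and>
                 (\<forall>y\<in>E c. holds V N E R y A \<longrightarrow> holds V N E R y B)))"

lemma holds_Neg [simp]: "holds V N E R w (Neg A) \<longleftrightarrow> \<not> holds V N E R w A"
  by (simp add: Neg_def)

lemma holds_Iff [simp]: "holds V N E R w (Iff A B) \<longleftrightarrow> (holds V N E R w A \<longleftrightarrow> holds V N E R w B)"
  by (auto simp: Iff_def)

lemma holds_Cond_Bot:
  "holds V N E R w (Cond A Bot) \<longleftrightarrow> (\<forall>a\<in>N w. \<forall>y\<in>E a. \<not> holds V N E R y A)"
  by auto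

lemma peval_holds: "peval (holds V N E R w) A = holds V N E R w A"
  by (induction A) simp_all

lemma holds_cong: "V y = V w \<Longrightarrow> N y = N w \<Longrightarrow> holds V N E R y A = holds V N E R w A"
  by (induction A) simp_all

lemma hasW_hasT: "hasW L \<Longrightarrow> hasT L" and hasT_hasN: "hasT L \<Longrightarrow> hasN L"
  and hasC_hasW: "hasC L \<Longrightarrow> hasW L"
  unfolding hasW_def hasT_def hasN_def hasC_def by auto

(* Neighbourhoods are names with an extension E; the inclusion R between them is only required
   to be a preorder that is compatible with extensions, since the canonical model only knows
   the inclusions recorded in the proof search. *)
locale nbhd_model =
  fixes L :: logic and V :: "'w \<Rightarrow> nat \<Rightarrow> bool" and N :: "'w \<Rightarrow> 'n set"
    and E :: "'n \<Rightarrow> 'w set" and R :: "'n \<Rightarrow> 'n \<Rightarrow> bool"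
  assumes R_refl: "R a a"
    and R_trans: "R c b \<Longrightarrow> R b a \<Longrightarrow> R c a"
    and R_ext: "R c a \<Longrightarrow> E c \<subseteq> E a"
    and normal: "hasN L \<Longrightarrow> \<exists>a\<in>N x. E a \<noteq> {}"
    and total: "hasT L \<Longrightarrow> \<exists>a\<in>N x. x \<in> E a"
    and weakly_centered: "hasW L \<Longrightarrow> a \<in> N x \<Longrightarrow> x \<in> E a"
    and centered: "hasC L \<Longrightarrow>
      \<exists>s\<in>N x. (\<forall>a\<in>N x. R s a) \<and> x \<in> E s \<and> (\<forall>y\<in>E s. V y = V x \<and> N y = N x)"
    and uniform1: "hasU L \<Longrightarrow> a \<in> N x \<Longrightarrow> y \<in> E a \<Longrightarrow> b \<in> N y \<Longrightarrow> z \<in> E b \<Longrightarrow>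
      \<exists>c\<in>N x. z \<in> E c"
    and uniform2: "hasU L \<Longrightarrow> a \<in> N x \<Longrightarrow> y \<in> E a \<Longrightarrow> b \<in> N x \<Longrightarrow> z \<in> E b \<Longrightarrow>
      \<exists>c\<in>N y. z \<in> E c"
    and absolute: "hasA L \<Longrightarrow> a \<in> N x \<Longrightarrow> y \<in> E a \<Longrightarrow> N y = N x"
begin

abbreviation sat :: "'w \<Rightarrow> form \<Rightarrow> bool" where "sat \<equiv> holds V N E R"

lemma sat_Cond_if_nbhd_sat:
  "(\<And>a y. a \<in> N w \<Longrightarrow> y \<in> E a \<Longrightarrow> sat y B) \<Longrightarrow> sat w (Cond A B)"
  using R_refl by fastforce

lemma sat_Cond_absolute:
  assumes "hasA L" "a \<in> N x" "y \<in> E a" shows "sat y (Cond A B) = sat x (Cond A B)"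
  using absolute[OF assms] by simp

lemma sat_Cond_refine:
  assumes AB: "sat w (Cond A B)" and AC: "sat w (Cond A C)"
    and a: "a \<in> N w" "\<exists>y\<in>E a. sat y A"
  obtains d where "d \<in> N w" "R d a" "\<exists>y\<in>E d. sat y A" "\<forall>y\<in>E d. sat y A \<longrightarrow> sat y B \<and> sat y C"
proof -
  from AB a obtain c where c: "c \<in> N w" "R c a" "\<exists>y\<in>E c. sat y A" "\<forall>y\<in>E c. sat y A \<longrightarrow> sat y B"
    by (simp only: holds.simps) blast
  with AC obtain d where d: "d \<in> N w" "R d c" "\<exists>y\<in>E d. sat y A" "\<forall>y\<in>E d. sat y A \<longrightarrow> sat y C"
    by (simp only: holds.simps) blast
  have "R d a" using R_trans d(2) c(2) .
  moreover have "\<forall>y\<in>E d. sat y A \<longrightarrow> sat y B" using R_ext[OF d(2)] c(4) by blast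
  ultimately show thesis using that d by blast
qed

lemma sat_Cond_conj:
  assumes "sat w (Cond A B)" "sat w (Cond A C)"
  shows "sat w (Cond A (And B C))"
proof (unfold holds.simps(6), intro ballI impI)
  fix a assume "a \<in> N w" "\<exists>y\<in>E a. sat y A"
  then obtain d where "d \<in> N w" "R d a" "\<exists>y\<in>E d. sat y A" "\<forall>y\<in>E d. sat y A \<longrightarrow> sat y B \<and> sat y C"
    by (rule sat_Cond_refine[OF assms])
  then show "\<exists>d\<in>N w. R d a \<and> (\<exists>y\<in>E d. sat y A) \<and> (\<forall>y\<in>E d. sat y A \<longrightarrow> sat y (And B C))"
    by auto
qed

lemma sat_Cond_cautious_mono:
  assumes "sat w (Cond A B)" "sat w (Cond A C)"
  shows "sat w (Cond (And A B) C)"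
proof (unfold holds.simps(6), intro ballI impI)
  fix a assume "a \<in> N w" "\<exists>y\<in>E a. sat y (And A B)"
  then have "a \<in> N w" "\<exists>y\<in>E a. sat y A" by auto
  then obtain d where "d \<in> N w" "R d a" "\<exists>y\<in>E d. sat y A" "\<forall>y\<in>E d. sat y A \<longrightarrow> sat y B \<and> sat y C"
    by (rule sat_Cond_refine[OF assms])
  then show "\<exists>d\<in>N w. R d a \<and> (\<exists>y\<in>E d. sat y (And A B)) \<and> (\<forall>y\<in>E d. sat y (And A B) \<longrightarrow> sat y C)"
    by auto
qed

lemma sat_Cond_disj:
  assumes AC: "sat w (Cond A C)" and BC: "sat w (Cond B C)"
  shows "sat w (Cond (Or A B) C)"
proof (unfold holds.simps(6), intro ballI impI)
  fix a assume a: "a \<in> N w" "\<exists>y\<in>E a. sat y (Or A B)"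
  let ?good = "\<lambda>c. R c a \<and> (\<exists>y\<in>E c. sat y (Or A B)) \<and> (\<forall>y\<in>E c. sat y (Or A B) \<longrightarrow> sat y C)"
  show "\<exists>c\<in>N w. ?good c"
  proof (cases "\<exists>y\<in>E a. sat y A")
    case True
    with AC a obtain c where c: "c \<in> N w" "R c a" "\<exists>y\<in>E c. sat y A" "\<forall>y\<in>E c. sat y A \<longrightarrow> sat y C"
      by (simp only: holds.simps) blast
    show ?thesis
    proof (cases "\<exists>y\<in>E c. sat y B")
      case True
      with BC c obtain d where d: "d \<in> N w" "R d c" "\<exists>y\<in>E d. sat y B" "\<forall>y\<in>E d. sat y B \<longrightarrow> sat y C"
        by (simp only: holds.simps) blast
      have "R d a" using R_trans d(2) c(2) .
      moreover have "\<forall>y\<in>E d. sat y A \<longrightarrow> sat y C" using R_ext[OF d(2)] c(4) by blast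
      ultimately have "?good d" using d by auto
      then show ?thesis using d(1) ..
    next
      case False
      then have "?good c" using c by auto
      then show ?thesis using c(1) ..
    qed
  next
    case False
    with a have "\<exists>y\<in>E a. sat y B" by auto
    with BC a obtain c where c: "c \<in> N w" "R c a" "\<exists>y\<in>E c. sat y B" "\<forall>y\<in>E c. sat y B \<longrightarrow> sat y C"
      by (simp only: holds.simps) blast
    have "\<forall>y\<in>E c. \<not> sat y A" using R_ext[OF c(2)] False by blast
    then have "?good c" using c by auto
    then show ?thesis using c(1) ..
  qed
qed

lemma sat_Cond_centered:
  assumes "hasC L" "sat w A" "sat w B"
  shows "sat w (Cond A B)"
proof -
  obtain s where s: "s \<in> N w" "\<forall>a\<in>N w. R s a" "w \<in> E s"
    and indist: "\<forall>y\<in>E s. V y = V w \<and> N y = N w"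
    using centered[OF assms(1), of w] by (elim bexE conjE)
  have "\<forall>y\<in>E s. sat y B" using holds_cong indist assms(3) by metis
  then show ?thesis unfolding holds.simps(6) using s assms(2) by blast
qed

theorem hderiv_sound: "hderiv L A \<Longrightarrow> sat w A"
proof (induction L\<equiv>L A arbitrary: w rule: hderiv.induct)
  case (Taut A)
  then show ?case using peval_holds unfolding taut_def by metis
next
  case (MP A B)
  then show ?case by simp
next
  case (RCEA A B C)
  then show ?case by simp
next
  case (RCK A B C)
  then show ?case by simp blast
next
  case (ID A)
  then show ?case using R_refl by auto
next
  case (RAnd A B C)
  show ?case using sat_Cond_conj by (simp del: holds.simps(6))
next
  case (CM A B C)
  show ?case using sat_Cond_cautious_mono by (simp del: holds.simps(6))
next
  case (OR A C B)
  show ?case using sat_Cond_disj by (simp del: holds.simps(6))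
next
  case AxN
  then show ?case using normal by (fastforce simp: Top_def)
next
  case (AxT A)
  then show ?case using total by (simp del: holds.simps(6) add: holds_Cond_Bot) blast
next
  case (AxW A B)
  then obtain a where "a \<in> N w" "w \<in> E a" using total hasW_hasT by blast
  then show ?case using weakly_centered[OF AxW(1)] by auto
next
  case (AxC A B)
  then show ?case using sat_Cond_centered by (simp del: holds.simps(6))
next
  case (AxU1 A)
  then show ?case using uniform1 by (simp del: holds.simps(6) add: holds_Cond_Bot) blast
next
  case (AxU2 A)
  then show ?case using uniform2 by (simp del: holds.simps(6) add: holds_Cond_Bot) blast
next
  case (AxA1 A B C)
  then show ?case using sat_Cond_if_nbhd_sat sat_Cond_absolute by (simp del: holds.simps(6))
next
  case (AxA2 A B C)
  then show ?case using sat_Cond_if_nbhd_sat sat_Cond_absolute by (simp del: holds.simps(6))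
qed

end

section \<open>Fair proof search\<close>

type_synonym sequent = "lform multiset \<times> lform multiset"

abbreviation derivable :: "logic \<Rightarrow> sequent \<Rightarrow> bool" where
  "derivable L S \<equiv> deriv L (fst S) (snd S)"

lemma finite_wl_seq: "finite (wl_seq G D)"
proof -
  have "finite (wl_nl a)" for a by (cases a) simp_all
  then have "finite (wl_lf F)" for F by (cases F) simp_all
  then show ?thesis unfolding wl_seq_def by auto
qed

lemma finite_nv_seq: "finite (nv_seq G D)"
proof -
  have "finite (nv_nl a)" for a by (cases a) simp_all
  then have "finite (nv_lf F)" for F by (cases F) simp_all
  then show ?thesis unfolding nv_seq_def by auto
qed

definition fresh_wlabel :: "lform multiset \<Rightarrow> lform multiset \<Rightarrow> wlabel" where
  "fresh_wlabel G D = (SOME y. y \<notin> wl_seq G D)"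

definition fresh_nvar :: "lform multiset \<Rightarrow> lform multiset \<Rightarrow> nat" where
  "fresh_nvar G D = (SOME n. n \<notin> nv_seq G D)"

lemma fresh_wlabel: "fresh_wlabel G D \<notin> wl_seq G D"
  unfolding fresh_wlabel_def by (rule someI_ex, rule ex_new_if_finite) (simp_all add: finite_wl_seq)

lemma fresh_nvar: "fresh_nvar G D \<notin> nv_seq G D"
  unfolding fresh_nvar_def by (rule someI_ex, rule ex_new_if_finite) (simp_all add: finite_nv_seq)

(* A task names a rule instance by its rule and principal labels and formulas; the context is
   the sequent the task is applied to. *)
datatype task =
    TLAnd wlabel form form | TRAnd wlabel form form | TLOr wlabel form form | TROr wlabel form form
  | TLImp wlabel form form | TRImp wlabel form form
  | TLAll wlabel nlabel form | TRAll nlabel form | TLEx nlabel form | TREx wlabel nlabel form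
  | TRCond wlabel form form | TLCond wlabel nlabel form form
  | TRBar wlabel nlabel nlabel form form | TLBar wlabel nlabel form form
  | TRef nlabel | TTr nlabel nlabel nlabel | TLSub wlabel nlabel nlabel
  | TN wlabel | T0 nlabel wlabel | TT wlabel | TW nlabel wlabel | TSingle wlabel | TC nlabel wlabel
  | TRepl1 wlabel wlabel atkind | TRepl2 wlabel wlabel atkind
  | TU1 nlabel wlabel wlabel nlabel wlabel | TU2 nlabel wlabel wlabel nlabel wlabel
  | TA1 nlabel wlabel wlabel nlabel | TA2 nlabel wlabel wlabel nlabel

(* The premisses of the instance of the rule named by the task whose conclusion is the given
   sequent; the sequent itself if the instance does not apply. *)
fun premisses :: "logic \<Rightarrow> task \<Rightarrow> sequent \<Rightarrow> sequent list" where
  "premisses L (TLAnd x A B) (G, D) = (if Lab x (And A B) \<in># G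
     then [({#Lab x A, Lab x B#} + (G - {#Lab x (And A B)#}), D)] else [(G, D)])"
| "premisses L (TRAnd x A B) (G, D) = (if Lab x (And A B) \<in># D
     then [(G, add_mset (Lab x A) (D - {#Lab x (And A B)#})),
           (G, add_mset (Lab x B) (D - {#Lab x (And A B)#}))] else [(G, D)])"
| "premisses L (TLOr x A B) (G, D) = (if Lab x (Or A B) \<in># G
     then [(add_mset (Lab x A) (G - {#Lab x (Or A B)#}), D),
           (add_mset (Lab x B) (G - {#Lab x (Or A B)#}), D)] else [(G, D)])"
| "premisses L (TROr x A B) (G, D) = (if Lab x (Or A B) \<in># D
     then [(G, {#Lab x A, Lab x B#} + (D - {#Lab x (Or A B)#}))] else [(G, D)])"
| "premisses L (TLImp x A B) (G, D) = (if Lab x (Imp A B) \<in># G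
     then [(G - {#Lab x (Imp A B)#}, add_mset (Lab x A) D),
           (add_mset (Lab x B) (G - {#Lab x (Imp A B)#}), D)] else [(G, D)])"
| "premisses L (TRImp x A B) (G, D) = (if Lab x (Imp A B) \<in># D
     then [(add_mset (Lab x A) G, add_mset (Lab x B) (D - {#Lab x (Imp A B)#}))] else [(G, D)])"
| "premisses L (TLAll x a A) (G, D) = (if {#Mem x a, FAll a A#} \<subseteq># G
     then [(add_mset (Lab x A) G, D)] else [(G, D)])"
| "premisses L (TRAll a A) (G, D) = (if FAll a A \<in># D
     then (let y = fresh_wlabel G D in
           [(add_mset (Mem y a) G, add_mset (Lab y A) (D - {#FAll a A#}))]) else [(G, D)])"
| "premisses L (TLEx a A) (G, D) = (if FEx a A \<in># G
     then (let y = fresh_wlabel G D in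
           [({#Mem y a, Lab y A#} + (G - {#FEx a A#}), D)]) else [(G, D)])"
| "premisses L (TREx x a A) (G, D) = (if Mem x a \<in># G \<and> FEx a A \<in># D
     then [(G, add_mset (Lab x A) D)] else [(G, D)])"
| "premisses L (TRCond x A B) (G, D) = (if Lab x (Cond A B) \<in># D
     then (let n = fresh_nvar G D in
           [({#InN (NV n) x, FEx (NV n) A#} + G,
             add_mset (CondL x (NV n) A B) (D - {#Lab x (Cond A B)#}))]) else [(G, D)])"
| "premisses L (TLCond x a A B) (G, D) = (if {#InN a x, Lab x (Cond A B)#} \<subseteq># G
     then [(G, add_mset (FEx a A) D), (add_mset (CondL x a A B) G, D)] else [(G, D)])"
| "premisses L (TRBar x a c A B) (G, D) = (if {#InN c x, Sub c a#} \<subseteq># G \<and> CondL x a A B \<in># D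
     then [(G, add_mset (FEx c A) D), (G, add_mset (FAll c (Imp A B)) D)] else [(G, D)])"
| "premisses L (TLBar x a A B) (G, D) = (if CondL x a A B \<in># G
     then (let n = fresh_nvar G D in
           [({#InN (NV n) x, Sub (NV n) a, FEx (NV n) A, FAll (NV n) (Imp A B)#}
               + (G - {#CondL x a A B#}), D)]) else [(G, D)])"
| "premisses L (TRef a) (G, D) = [(add_mset (Sub a a) G, D)]"
| "premisses L (TTr c b a) (G, D) = (if {#Sub c b, Sub b a#} \<subseteq># G
     then [(add_mset (Sub c a) G, D)] else [(G, D)])"
| "premisses L (TLSub x a b) (G, D) = (if {#Mem x a, Sub a b#} \<subseteq># G
     then [(add_mset (Mem x b) G, D)] else [(G, D)])"
| "premisses L (TN x) (G, D) = (if hasN L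
     then [(add_mset (InN (NV (fresh_nvar G D)) x) G, D)] else [(G, D)])"
| "premisses L (T0 a x) (G, D) = (if hasN L \<and> InN a x \<in># G
     then [(add_mset (Mem (fresh_wlabel G D) a) G, D)] else [(G, D)])"
| "premisses L (TT x) (G, D) = (if hasT L
     then (let n = fresh_nvar G D in [({#Mem x (NV n), InN (NV n) x#} + G, D)]) else [(G, D)])"
| "premisses L (TW a x) (G, D) = (if hasW L \<and> InN a x \<in># G
     then [(add_mset (Mem x a) G, D)] else [(G, D)])"
| "premisses L (TSingle x) (G, D) = (if hasC L \<and> InN (Sg x) x \<in># G
     then [(add_mset (Mem x (Sg x)) G, D)] else [(G, D)])"
| "premisses L (TC a x) (G, D) = (if hasC L \<and> InN a x \<in># G
     then [({#InN (Sg x) x, Sub (Sg x) a#} + G, D)] else [(G, D)])"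
| "premisses L (TRepl1 y x k) (G, D) = (if hasC L \<and> {#Mem y (Sg x), At k x#} \<subseteq># G
     then [(add_mset (At k y) G, D)] else [(G, D)])"
| "premisses L (TRepl2 y x k) (G, D) = (if hasC L \<and> {#Mem y (Sg x), At k y#} \<subseteq># G
     then [(add_mset (At k x) G, D)] else [(G, D)])"
| "premisses L (TU1 a x y b z) (G, D) =
     (if hasU L \<and> {InN a x, Mem y a, InN b y, Mem z b} \<subseteq> set_mset G
      then (let n = fresh_nvar G D in [({#Mem z (NV n), InN (NV n) x#} + G, D)]) else [(G, D)])"
| "premisses L (TU2 a x y b z) (G, D) =
     (if hasU L \<and> {InN a x, Mem y a, InN b x, Mem z b} \<subseteq> set_mset G
      then (let n = fresh_nvar G D in [({#Mem z (NV n), InN (NV n) y#} + G, D)]) else [(G, D)])"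
| "premisses L (TA1 a x y b) (G, D) = (if hasA L \<and> {InN a x, Mem y a, InN b x} \<subseteq> set_mset G
     then [(add_mset (InN b y) G, D)] else [(G, D)])"
| "premisses L (TA2 a x y b) (G, D) = (if hasA L \<and> {#InN a x, Mem y a, InN b y#} \<subseteq># G
     then [(add_mset (InN b x) G, D)] else [(G, D)])"

lemma add_mset2_diff: "{#a, b#} \<subseteq># M \<Longrightarrow> add_mset a (add_mset b (M - {#a, b#})) = M"
  using subset_mset.add_diff_inverse by fastforce

lemma add_mset3_diff:
  "{#a, b, c#} \<subseteq># M \<Longrightarrow> add_mset a (add_mset b (add_mset c (M - {#a, b, c#}))) = M"
  using subset_mset.add_diff_inverse by fastforce

lemma add_mset_subseteq_iff_notin:
  assumes "a \<notin># M"
  shows "add_mset a M \<subseteq># N \<longleftrightarrow> a \<in># N \<and> M \<subseteq># N"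
proof
  assume "add_mset a M \<subseteq># N"
  then show "a \<in># N \<and> M \<subseteq># N"
    by (simp add: insert_subset_eq_iff) (meson diff_subset_eq_self subset_mset.order_trans)
next
  assume N: "a \<in># N \<and> M \<subseteq># N"
  have "count (add_mset a M) x \<le> count N x" for x
  proof (cases "x = a")
    case True
    then show ?thesis using assms N by (simp add: not_in_iff Suc_le_eq)
  next
    case False
    then show ?thesis using N by (simp add: subseteq_mset_def)
  qed
  then show "add_mset a M \<subseteq># N" by (simp add: subseteq_mset_def)
qed

lemmas rule_instance_simps = Let_def fresh_wlabel fresh_nvar add_mset2_diff add_mset3_diff

lemma premisses_sound:
  assumes "\<forall>P\<in>set (premisses L t (G, D)). derivable L P"
  shows "deriv L G D"
proof (cases t)
  case (TLAnd x A B)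
  then show ?thesis
    using assms deriv.LAnd[where x = x and A = A and B = B and D = D
        and G = "G - {#Lab x (And A B)#}"]
    by (auto simp: rule_instance_simps split: if_splits)
next
  case (TRAnd x A B)
  then show ?thesis
    using assms deriv.RAnd[where x = x and A = A and B = B and G = G
        and D = "D - {#Lab x (And A B)#}"]
    by (auto simp: rule_instance_simps split: if_splits)
next
  case (TLOr x A B)
  then show ?thesis
    using assms deriv.LOr[where x = x and A = A and B = B and D = D
        and G = "G - {#Lab x (Or A B)#}"]
    by (auto simp: rule_instance_simps split: if_splits)
next
  case (TROr x A B)
  then show ?thesis
    using assms deriv.ROr[where x = x and A = A and B = B and G = G
        and D = "D - {#Lab x (Or A B)#}"]
    by (auto simp: rule_instance_simps split: if_splits)
next
  case (TLImp x A B)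
  then show ?thesis
    using assms deriv.LImp[where x = x and A = A and B = B and D = D
        and G = "G - {#Lab x (Imp A B)#}"]
    by (auto simp: rule_instance_simps split: if_splits)
next
  case (TRImp x A B)
  then show ?thesis
    using assms deriv.RImp[where x = x and A = A and B = B and G = G
        and D = "D - {#Lab x (Imp A B)#}"]
    by (auto simp: rule_instance_simps split: if_splits)
next
  case (TLAll x a A)
  then show ?thesis
    using assms deriv.LAll[where x = x and a = a and A = A and D = D
        and G = "G - {#Mem x a, FAll a A#}"]
    by (auto simp: rule_instance_simps split: if_splits)
next
  case (TRAll a A)
  then show ?thesis
    using assms deriv.RAll[where a = a and A = A and G = G
        and x = "fresh_wlabel G D" and D = "D - {#FAll a A#}"]
    by (auto simp: rule_instance_simps split: if_splits)
next
  case (TLEx a A)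
  then show ?thesis
    using assms deriv.LEx[where a = a and A = A and D = D
        and x = "fresh_wlabel G D" and G = "G - {#FEx a A#}"]
    by (auto simp: rule_instance_simps split: if_splits)
next
  case (TREx x a A)
  then show ?thesis
    using assms deriv.REx[where x = x and a = a and A = A
        and G = "G - {#Mem x a#}" and D = "D - {#FEx a A#}"]
    by (auto simp: rule_instance_simps split: if_splits)
next
  case (TRCond x A B)
  then show ?thesis
    using assms deriv.RCond[where x = x and A = A and B = B and G = G
        and n = "fresh_nvar G D" and D = "D - {#Lab x (Cond A B)#}"]
    by (auto simp: rule_instance_simps split: if_splits)
next
  case (TLCond x a A B)
  then show ?thesis
    using assms deriv.LCond[where x = x and a = a and A = A and B = B and D = D
        and G = "G - {#InN a x, Lab x (Cond A B)#}"]
    by (auto simp: rule_instance_simps split: if_splits)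
next
  case (TRBar x a c A B)
  then show ?thesis
    using assms deriv.RBar[where x = x and a = a and c = c and A = A and B = B
        and G = "G - {#InN c x, Sub c a#}" and D = "D - {#CondL x a A B#}"]
    by (auto simp: rule_instance_simps add_mset_commute[of "CondL x a A B"] split: if_splits)
next
  case (TLBar x a A B)
  then show ?thesis
    using assms deriv.LBar[where x = x and a = a and A = A and B = B and D = D
        and n = "fresh_nvar G D" and G = "G - {#CondL x a A B#}"]
    by (auto simp: rule_instance_simps split: if_splits)
next
  case (TRef a)
  then show ?thesis
    using assms deriv.Ref[where a = a and G = G and D = D]
    by (auto simp: rule_instance_simps split: if_splits)
next
  case (TTr c b a)
  then show ?thesis
    using assms deriv.Tr[where c = c and b = b and a = a and D = D
        and G = "G - {#Sub c b, Sub b a#}"]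
    by (auto simp: rule_instance_simps split: if_splits)
next
  case (TLSub x a b)
  then show ?thesis
    using assms deriv.LSub[where x = x and a = a and b = b and D = D
        and G = "G - {#Mem x a, Sub a b#}"]
    by (auto simp: rule_instance_simps add_mset_commute[of _ "Mem x b"] split: if_splits)
next
  case (TN x)
  then show ?thesis
    using assms deriv.RuleN[where x = x and G = G and D = D
        and n = "fresh_nvar G D"]
    by (auto simp: rule_instance_simps split: if_splits)
next
  case (T0 a x)
  then show ?thesis
    using assms deriv.Rule0[where a = a and x = x and D = D
        and y = "fresh_wlabel G D" and G = "G - {#InN a x#}"]
    by (auto simp: rule_instance_simps split: if_splits)
next
  case (TT x)
  then show ?thesis
    using assms deriv.RuleT[where x = x and G = G and D = D
        and n = "fresh_nvar G D"]
    by (auto simp: rule_instance_simps split: if_splits)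
next
  case (TW a x)
  then show ?thesis
    using assms deriv.RuleW[where a = a and x = x and D = D
        and G = "G - {#InN a x#}"]
    by (auto simp: rule_instance_simps split: if_splits)
next
  case (TSingle x)
  then show ?thesis
    using assms deriv.Single[where x = x and D = D
        and G = "G - {#InN (Sg x) x#}"]
    by (auto simp: rule_instance_simps split: if_splits)
next
  case (TC a x)
  then show ?thesis
    using assms deriv.RuleC[where a = a and x = x and D = D
        and G = "G - {#InN a x#}"]
    by (auto simp: rule_instance_simps split: if_splits)
next
  case (TRepl1 y x k)
  then show ?thesis
    using assms deriv.Repl1[where y = y and x = x and k = k and D = D
        and G = "G - {#Mem y (Sg x), At k x#}"]
    by (auto simp: rule_instance_simps add_mset_commute[of _ "At k y"] split: if_splits)
next
  case (TRepl2 y x k)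
  then show ?thesis
    using assms deriv.Repl2[where y = y and x = x and k = k and D = D
        and G = "G - {#Mem y (Sg x), At k y#}"]
    by (auto simp: rule_instance_simps add_mset_commute[of _ "At k x"] split: if_splits)
next
  case (TU1 a x y b z)
  then show ?thesis
    using assms deriv.RuleU1[where a = a and x = x and y = y and b = b and z = z and G = G and D = D
        and n = "fresh_nvar G D"]
    by (auto simp: rule_instance_simps split: if_splits)
next
  case (TU2 a x y b z)
  then show ?thesis
    using assms deriv.RuleU2[where a = a and x = x and y = y and b = b and z = z and G = G and D = D
        and n = "fresh_nvar G D"]
    by (auto simp: rule_instance_simps split: if_splits)
next
  case (TA1 a x y b)
  then show ?thesis
    using assms deriv.RuleA1[where a = a and x = x and y = y and b = b and G = G and D = D]
    by (auto simp: rule_instance_simps split: if_splits)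
next
  case (TA2 a x y b)
  then show ?thesis
    using assms deriv.RuleA2[where a = a and x = x and y = y and b = b and D = D
        and G = "G - {#InN a x, Mem y a, InN b y#}"]
    by (auto simp: rule_instance_simps split: if_splits)
qed

(* Continues the search with an underivable premiss; on derivable sequents the choice is
   arbitrary, but the search never reaches one. *)
definition step :: "logic \<Rightarrow> task \<Rightarrow> sequent \<Rightarrow> sequent" where
  "step L t S = (SOME P. P \<in> set (premisses L t S) \<and> \<not> derivable L P)"

lemma step_underivable:
  assumes "\<not> derivable L S"
  shows "step L t S \<in> set (premisses L t S)" and "\<not> derivable L (step L t S)"
proof -
  obtain G D where S: "S = (G, D)" by fastforce
  have "\<not> deriv L G D" using assms S by simp
  then have "\<exists>P. P \<in> set (premisses L t S) \<and> \<not> derivable L P"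
    using premisses_sound[of L t G D] S by blast
  then show "step L t S \<in> set (premisses L t S)" and "\<not> derivable L (step L t S)"
    unfolding step_def by (metis (no_types, lifting) someI_ex)+
qed

(* The task whose premisses no longer contain the given antecedent (consumerL) or succedent
   (consumerR) formula; all other formulas persist from one stage of the search to the next. *)
fun consumerL :: "lform \<Rightarrow> task option" where
  "consumerL (Lab x (And A B)) = Some (TLAnd x A B)"
| "consumerL (Lab x (Or A B)) = Some (TLOr x A B)"
| "consumerL (Lab x (Imp A B)) = Some (TLImp x A B)"
| "consumerL (FEx a A) = Some (TLEx a A)"
| "consumerL (CondL x a A B) = Some (TLBar x a A B)"
| "consumerL _ = None"

fun consumerR :: "lform \<Rightarrow> task option" where
  "consumerR (Lab x (And A B)) = Some (TRAnd x A B)"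
| "consumerR (Lab x (Or A B)) = Some (TROr x A B)"
| "consumerR (Lab x (Imp A B)) = Some (TRImp x A B)"
| "consumerR (FAll a A) = Some (TRAll a A)"
| "consumerR (Lab x (Cond A B)) = Some (TRCond x A B)"
| "consumerR _ = None"

lemma consumerL_At: "consumerL (At k x) = None"
  by (cases k) simp_all

lemma premisses_keep:
  assumes "P \<in> set (premisses L t S)"
  shows "F \<in># fst S \<Longrightarrow> consumerL F \<noteq> Some t \<Longrightarrow> F \<in># fst P"
    and "F \<in># snd S \<Longrightarrow> consumerR F \<noteq> Some t \<Longrightarrow> F \<in># snd P"
  using assms by (cases S; cases t; auto simp: Let_def in_diff_count split: if_splits)+

instance form :: countable by countable_datatype
instance nlabel :: countable by countable_datatype
instance atkind :: countable by countable_datatype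
instance task :: countable by countable_datatype

definition task_enum :: "nat \<Rightarrow> task" where
  "task_enum k = from_nat (fst (prod_decode k))"

lemma task_enum_frequently: "\<exists>\<^sub>F k in sequentially. task_enum k = t"
  unfolding frequently_sequentially
proof
  fix N
  have "task_enum (prod_encode (to_nat t, N)) = t" by (simp add: task_enum_def)
  then show "\<exists>k\<ge>N. task_enum k = t" using le_prod_encode_2 by blast
qed

lemma task_enum_reached:
  assumes "Q k" and "\<And>j. Q j \<Longrightarrow> task_enum j \<noteq> t \<Longrightarrow> Q (Suc j)"
  shows "\<exists>j. task_enum j = t \<and> Q j"
proof (rule ccontr)
  assume none: "\<nexists>j. task_enum j = t \<and> Q j"
  have "Q j" if "k \<le> j" for j
    using that by (induction rule: dec_induct) (use assms none in blast)+
  then have "\<forall>\<^sub>F j in sequentially. Q j" unfolding eventually_sequentially by blast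
  with task_enum_frequently have "\<exists>\<^sub>F j in sequentially. Q j \<and> task_enum j = t"
    by (rule frequently_eventually_conj)
  with none show False by (auto dest: frequently_ex)
qed

primrec search :: "logic \<Rightarrow> sequent \<Rightarrow> nat \<Rightarrow> sequent" where
  "search L S 0 = S"
| "search L S (Suc k) = step L (task_enum k) (search L S k)"

locale failed_search =
  fixes L :: logic and S0 :: sequent
  assumes underivable: "\<not> derivable L S0"
begin

abbreviation stage :: "nat \<Rightarrow> sequent" where "stage \<equiv> search L S0"

lemma stage_underivable: "\<not> derivable L (stage k)"
  by (induction k) (simp_all add: underivable step_underivable)

lemma stage_Suc: "stage (Suc k) \<in> set (premisses L (task_enum k) (stage k))"
  using step_underivable(1)[OF stage_underivable] by simp

definition Gamma :: "lform set" where "Gamma = (\<Union>k. set_mset (fst (stage k)))"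
definition Delta :: "lform set" where "Delta = (\<Union>k. set_mset (snd (stage k)))"

(* Formulas consumed by no task other than t stay until t is next scheduled. *)
lemma task_applied:
  assumes "Fs \<subseteq> set_mset (fst (stage k))" "Hs \<subseteq> set_mset (snd (stage k))"
    and "\<forall>F\<in>Fs. consumerL F \<in> {None, Some t}" "\<forall>H\<in>Hs. consumerR H \<in> {None, Some t}"
  obtains G D P where "Fs \<subseteq> set_mset G" "Hs \<subseteq> set_mset D" "P \<in> set (premisses L t (G, D))"
    "set_mset (fst P) \<subseteq> Gamma" "set_mset (snd P) \<subseteq> Delta"
proof -
  let ?present = "\<lambda>j. Fs \<subseteq> set_mset (fst (stage j)) \<and> Hs \<subseteq> set_mset (snd (stage j))"
  have "?present (Suc j)" if "?present j" "task_enum j \<noteq> t" for j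
  proof -
    have "\<forall>F\<in>Fs. consumerL F \<noteq> Some (task_enum j)" "\<forall>H\<in>Hs. consumerR H \<noteq> Some (task_enum j)"
      using assms(3,4) that(2) by auto
    then show ?thesis using premisses_keep[OF stage_Suc[of j]] that(1) by blast
  qed
  then obtain j where j: "task_enum j = t" "?present j"
    using task_enum_reached[of ?present k t] assms(1,2) by blast
  show thesis
  proof
    show "stage (Suc j) \<in> set (premisses L t (fst (stage j), snd (stage j)))"
      using stage_Suc[of j] j(1) by simp
    show "set_mset (fst (stage (Suc j))) \<subseteq> Gamma" "set_mset (snd (stage (Suc j))) \<subseteq> Delta"
      unfolding Gamma_def Delta_def by blast+
  qed (use j in blast)+
qed

lemma task_applied_principalL:
  assumes "F \<in> Gamma" "consumerL F = Some t"
  obtains G D P where "F \<in># G" "P \<in> set (premisses L t (G, D))"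
    "set_mset (fst P) \<subseteq> Gamma" "set_mset (snd P) \<subseteq> Delta"
proof -
  obtain k where "F \<in># fst (stage k)" using assms(1) unfolding Gamma_def by blast
  show thesis
    by (rule task_applied[of "{F}" k "{}" t]) (use \<open>F \<in># fst (stage k)\<close> assms(2) that in auto)
qed

lemma task_applied_principalR:
  assumes "H \<in> Delta" "consumerR H = Some t"
  obtains G D P where "H \<in># D" "P \<in> set (premisses L t (G, D))"
    "set_mset (fst P) \<subseteq> Gamma" "set_mset (snd P) \<subseteq> Delta"
proof -
  obtain k where "H \<in># snd (stage k)" using assms(1) unfolding Delta_def by blast
  show thesis
    by (rule task_applied[of "{}" k "{H}" t]) (use \<open>H \<in># snd (stage k)\<close> assms(2) that in auto)
qed

lemma persistentL_eventually:
  assumes "F \<in> Gamma" "consumerL F = None"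
  shows "\<forall>\<^sub>F k in sequentially. F \<in># fst (stage k)"
proof -
  obtain k where k: "F \<in># fst (stage k)" using assms(1) unfolding Gamma_def by blast
  have "F \<in># fst (stage j)" if "k \<le> j" for j
    using that
  proof (induction rule: dec_induct)
    case base
    show ?case using k .
  next
    case (step j)
    then show ?case using premisses_keep(1)[OF stage_Suc[of j]] assms(2) by simp
  qed
  then show ?thesis unfolding eventually_sequentially by blast
qed

lemma persistentR_eventually:
  assumes "H \<in> Delta" "consumerR H = None"
  shows "\<forall>\<^sub>F k in sequentially. H \<in># snd (stage k)"
proof -
  obtain k where k: "H \<in># snd (stage k)" using assms(1) unfolding Delta_def by blast
  have "H \<in># snd (stage j)" if "k \<le> j" for j
    using that
  proof (induction rule: dec_induct)
    case base
    show ?case using k .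
  next
    case (step j)
    then show ?case using premisses_keep(2)[OF stage_Suc[of j]] assms(2) by simp
  qed
  then show ?thesis unfolding eventually_sequentially by blast
qed

lemma persistent_present:
  assumes "finite Fs" "Fs \<subseteq> Gamma" "\<forall>F\<in>Fs. consumerL F = None"
    and "finite Hs" "Hs \<subseteq> Delta" "\<forall>H\<in>Hs. consumerR H = None"
  shows "\<exists>k. Fs \<subseteq> set_mset (fst (stage k)) \<and> Hs \<subseteq> set_mset (snd (stage k))"
proof -
  have "\<forall>\<^sub>F k in sequentially. \<forall>F\<in>Fs. F \<in># fst (stage k)"
    using assms(1-3) by (intro eventually_ball_finite) (auto intro: persistentL_eventually)
  moreover have "\<forall>\<^sub>F k in sequentially. \<forall>H\<in>Hs. H \<in># snd (stage k)"
    using assms(4-6) by (intro eventually_ball_finite) (auto intro: persistentR_eventually)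
  ultimately have "\<forall>\<^sub>F k in sequentially.
      Fs \<subseteq> set_mset (fst (stage k)) \<and> Hs \<subseteq> set_mset (snd (stage k))"
    by eventually_elim auto
  then show ?thesis by (auto simp: eventually_sequentially)
qed

lemma task_applied_persistent:
  assumes "finite Fs" "Fs \<subseteq> Gamma" "\<forall>F\<in>Fs. consumerL F = None"
    and "finite Hs" "Hs \<subseteq> Delta" "\<forall>H\<in>Hs. consumerR H = None"
  obtains G D P where "Fs \<subseteq> set_mset G" "Hs \<subseteq> set_mset D" "P \<in> set (premisses L t (G, D))"
    "set_mset (fst P) \<subseteq> Gamma" "set_mset (snd P) \<subseteq> Delta"
proof -
  obtain k where k: "Fs \<subseteq> set_mset (fst (stage k))" "Hs \<subseteq> set_mset (snd (stage k))"
    using persistent_present[OF assms] by blast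
  show thesis by (rule task_applied[of Fs k Hs t]) (use k assms(3,6) that in auto)
qed

lemma Gamma_And: "Lab x (And A B) \<in> Gamma \<Longrightarrow> Lab x A \<in> Gamma \<and> Lab x B \<in> Gamma"
  by (erule task_applied_principalL[where t = "TLAnd x A B"]) auto

lemma Gamma_Or: "Lab x (Or A B) \<in> Gamma \<Longrightarrow> Lab x A \<in> Gamma \<or> Lab x B \<in> Gamma"
  by (erule task_applied_principalL[where t = "TLOr x A B"]) auto

lemma Gamma_Imp: "Lab x (Imp A B) \<in> Gamma \<Longrightarrow> Lab x A \<in> Delta \<or> Lab x B \<in> Gamma"
  by (erule task_applied_principalL[where t = "TLImp x A B"]) auto

lemma Delta_And: "Lab x (And A B) \<in> Delta \<Longrightarrow> Lab x A \<in> Delta \<or> Lab x B \<in> Delta"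
  by (erule task_applied_principalR[where t = "TRAnd x A B"]) auto

lemma Delta_Or: "Lab x (Or A B) \<in> Delta \<Longrightarrow> Lab x A \<in> Delta \<and> Lab x B \<in> Delta"
  by (erule task_applied_principalR[where t = "TROr x A B"]) auto

lemma Delta_Imp: "Lab x (Imp A B) \<in> Delta \<Longrightarrow> Lab x A \<in> Gamma \<and> Lab x B \<in> Delta"
  by (erule task_applied_principalR[where t = "TRImp x A B"]) auto

lemma Delta_All: "FAll a A \<in> Delta \<Longrightarrow> \<exists>y. Mem y a \<in> Gamma \<and> Lab y A \<in> Delta"
  by (erule task_applied_principalR[where t = "TRAll a A"]) (auto simp: Let_def)

lemma Gamma_Ex: "FEx a A \<in> Gamma \<Longrightarrow> \<exists>y. Mem y a \<in> Gamma \<and> Lab y A \<in> Gamma"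
  by (erule task_applied_principalL[where t = "TLEx a A"]) (auto simp: Let_def)

lemma Delta_Cond: "Lab x (Cond A B) \<in> Delta \<Longrightarrow>
    \<exists>n. InN (NV n) x \<in> Gamma \<and> FEx (NV n) A \<in> Gamma \<and> CondL x (NV n) A B \<in> Delta"
  by (erule task_applied_principalR[where t = "TRCond x A B"]) (auto simp: Let_def)

lemma Gamma_CondL: "CondL x a A B \<in> Gamma \<Longrightarrow>
    \<exists>n. InN (NV n) x \<in> Gamma \<and> Sub (NV n) a \<in> Gamma \<and> FEx (NV n) A \<in> Gamma
      \<and> FAll (NV n) (Imp A B) \<in> Gamma"
  by (erule task_applied_principalL[where t = "TLBar x a A B"]) (auto simp: Let_def)

lemma Gamma_All: "Mem x a \<in> Gamma \<Longrightarrow> FAll a A \<in> Gamma \<Longrightarrow> Lab x A \<in> Gamma"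
  by (rule task_applied_persistent[of "{Mem x a, FAll a A}" "{}" "TLAll x a A"])
    (auto simp: add_mset_subseteq_iff_notin)

lemma Delta_Ex: "Mem x a \<in> Gamma \<Longrightarrow> FEx a A \<in> Delta \<Longrightarrow> Lab x A \<in> Delta"
  by (rule task_applied_persistent[of "{Mem x a}" "{FEx a A}" "TREx x a A"]) auto

lemma Gamma_Cond: "InN a x \<in> Gamma \<Longrightarrow> Lab x (Cond A B) \<in> Gamma \<Longrightarrow>
    FEx a A \<in> Delta \<or> CondL x a A B \<in> Gamma"
  by (rule task_applied_persistent[of "{InN a x, Lab x (Cond A B)}" "{}" "TLCond x a A B"])
    (auto simp: add_mset_subseteq_iff_notin)

lemma Delta_CondL: "InN c x \<in> Gamma \<Longrightarrow> Sub c a \<in> Gamma \<Longrightarrow> CondL x a A B \<in> Delta \<Longrightarrow>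
    FEx c A \<in> Delta \<or> FAll c (Imp A B) \<in> Delta"
  by (rule task_applied_persistent[of "{InN c x, Sub c a}" "{CondL x a A B}" "TRBar x a c A B"])
    (auto simp: add_mset_subseteq_iff_notin)

lemma Gamma_Delta_Atom: "Lab x (Atom p) \<in> Gamma \<Longrightarrow> Lab x (Atom p) \<notin> Delta"
proof
  assume "Lab x (Atom p) \<in> Gamma" "Lab x (Atom p) \<in> Delta"
  then obtain k where "Lab x (Atom p) \<in># fst (stage k)" "Lab x (Atom p) \<in># snd (stage k)"
    using persistent_present[of "{Lab x (Atom p)}" "{Lab x (Atom p)}"] by auto
  then show False
    using stage_underivable[of k] deriv.Init by (metis insert_DiffM)
qed

lemma Gamma_Bot: "Lab x Bot \<notin> Gamma"
proof
  assume "Lab x Bot \<in> Gamma"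
  then obtain k where "Lab x Bot \<in># fst (stage k)" unfolding Gamma_def by blast
  then show False
    using stage_underivable[of k] deriv.LBot by (metis insert_DiffM)
qed

lemma Gamma_Sub_refl: "Sub a a \<in> Gamma"
  by (rule task_applied_persistent[of "{}" "{}" "TRef a"]) auto

lemma Gamma_Sub_trans:
  assumes "Sub c b \<in> Gamma" "Sub b a \<in> Gamma" shows "Sub c a \<in> Gamma"
proof (cases "Sub c b = Sub b a")
  case True
  then show ?thesis using assms(1) by simp
next
  case False
  show ?thesis
    by (rule task_applied_persistent[of "{Sub c b, Sub b a}" "{}" "TTr c b a"])
      (use assms False in \<open>auto simp: add_mset_subseteq_iff_notin\<close>)
qed

lemma Gamma_Mem_Sub: "Mem x a \<in> Gamma \<Longrightarrow> Sub a b \<in> Gamma \<Longrightarrow> Mem x b \<in> Gamma"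
  by (rule task_applied_persistent[of "{Mem x a, Sub a b}" "{}" "TLSub x a b"])
    (auto simp: add_mset_subseteq_iff_notin)

lemma Gamma_N: "hasN L \<Longrightarrow> \<exists>n. InN (NV n) x \<in> Gamma"
  by (rule task_applied_persistent[of "{}" "{}" "TN x"]) auto

lemma Gamma_0: "hasN L \<Longrightarrow> InN a x \<in> Gamma \<Longrightarrow> \<exists>y. Mem y a \<in> Gamma"
  by (rule task_applied_persistent[of "{InN a x}" "{}" "T0 a x"]) auto

lemma Gamma_T: "hasT L \<Longrightarrow> \<exists>n. Mem x (NV n) \<in> Gamma \<and> InN (NV n) x \<in> Gamma"
  by (rule task_applied_persistent[of "{}" "{}" "TT x"]) (auto simp: Let_def)

lemma Gamma_W: "hasW L \<Longrightarrow> InN a x \<in> Gamma \<Longrightarrow> Mem x a \<in> Gamma"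
  by (rule task_applied_persistent[of "{InN a x}" "{}" "TW a x"]) auto

lemma Gamma_Single: "hasC L \<Longrightarrow> InN (Sg x) x \<in> Gamma \<Longrightarrow> Mem x (Sg x) \<in> Gamma"
  by (rule task_applied_persistent[of "{InN (Sg x) x}" "{}" "TSingle x"]) auto

lemma Gamma_C: "hasC L \<Longrightarrow> InN a x \<in> Gamma \<Longrightarrow> InN (Sg x) x \<in> Gamma \<and> Sub (Sg x) a \<in> Gamma"
  by (rule task_applied_persistent[of "{InN a x}" "{}" "TC a x"]) auto

lemma Gamma_U1: "hasU L \<Longrightarrow> InN a x \<in> Gamma \<Longrightarrow> Mem y a \<in> Gamma \<Longrightarrow> InN b y \<in> Gamma \<Longrightarrow>
    Mem z b \<in> Gamma \<Longrightarrow> \<exists>n. Mem z (NV n) \<in> Gamma \<and> InN (NV n) x \<in> Gamma"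
  by (rule task_applied_persistent[of "{InN a x, Mem y a, InN b y, Mem z b}" "{}" "TU1 a x y b z"])
    (auto simp: Let_def)

lemma Gamma_U2: "hasU L \<Longrightarrow> InN a x \<in> Gamma \<Longrightarrow> Mem y a \<in> Gamma \<Longrightarrow> InN b x \<in> Gamma \<Longrightarrow>
    Mem z b \<in> Gamma \<Longrightarrow> \<exists>n. Mem z (NV n) \<in> Gamma \<and> InN (NV n) y \<in> Gamma"
  by (rule task_applied_persistent[of "{InN a x, Mem y a, InN b x, Mem z b}" "{}" "TU2 a x y b z"])
    (auto simp: Let_def)

(* The inequalities exclude the instances of the replacement rules whose two principal atoms
   coincide and would have to occur twice in the antecedent. *)
lemma Gamma_Repl:
  assumes "hasC L" "Mem y (Sg x) \<in> Gamma"
    and "At k x \<noteq> Mem y (Sg x)" "At k y \<noteq> Mem y (Sg x)"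
  shows "At k x \<in> Gamma \<longleftrightarrow> At k y \<in> Gamma"
proof
  assume "At k x \<in> Gamma"
  show "At k y \<in> Gamma"
    by (rule task_applied_persistent[of "{Mem y (Sg x), At k x}" "{}" "TRepl1 y x k"])
      (use assms \<open>At k x \<in> Gamma\<close> consumerL_At in \<open>auto simp: add_mset_subseteq_iff_notin\<close>)
next
  assume "At k y \<in> Gamma"
  show "At k x \<in> Gamma"
    by (rule task_applied_persistent[of "{Mem y (Sg x), At k y}" "{}" "TRepl2 y x k"])
      (use assms \<open>At k y \<in> Gamma\<close> consumerL_At in \<open>auto simp: add_mset_subseteq_iff_notin\<close>)
qed

lemma Gamma_A:
  assumes "hasA L" "InN a x \<in> Gamma" "Mem y a \<in> Gamma"
  shows "InN b y \<in> Gamma \<longleftrightarrow> InN b x \<in> Gamma"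
proof
  assume bx: "InN b x \<in> Gamma"
  show "InN b y \<in> Gamma"
    by (rule task_applied_persistent[of "{InN a x, Mem y a, InN b x}" "{}" "TA1 a x y b"])
      (use assms bx in auto)
next
  assume b_y: "InN b y \<in> Gamma"
  show "InN b x \<in> Gamma"
  proof (cases "InN a x = InN b y")
    case True
    then show ?thesis using assms(2) by simp
  next
    case False
    show ?thesis
      by (rule task_applied_persistent[of "{InN a x, Mem y a, InN b y}" "{}" "TA2 a x y b"])
        (use assms b_y False in \<open>auto simp: add_mset_subseteq_iff_notin\<close>)
  qed
qed

section \<open>Canonical countermodel\<close>

definition canon_V :: "wlabel \<Rightarrow> nat \<Rightarrow> bool" where "canon_V x p \<longleftrightarrow> Lab x (Atom p) \<in> Gamma"
definition canon_N :: "wlabel \<Rightarrow> nlabel set" where "canon_N x = {a. InN a x \<in> Gamma}"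
definition canon_E :: "nlabel \<Rightarrow> wlabel set" where "canon_E a = {y. Mem y a \<in> Gamma}"
definition canon_R :: "nlabel \<Rightarrow> nlabel \<Rightarrow> bool" where "canon_R c a \<longleftrightarrow> Sub c a \<in> Gamma"

lemmas canon_defs = canon_V_def canon_N_def canon_E_def canon_R_def

lemma canon_centered:
  assumes "hasC L"
  shows "\<exists>s\<in>canon_N x. (\<forall>a\<in>canon_N x. canon_R s a) \<and> x \<in> canon_E s \<and>
    (\<forall>y\<in>canon_E s. canon_V y = canon_V x \<and> canon_N y = canon_N x)"
proof (intro bexI conjI ballI)
  have "hasN L" using assms hasC_hasW hasW_hasT hasT_hasN by blast
  then obtain n where "InN (NV n) x \<in> Gamma" using Gamma_N by blast
  then show Sg: "Sg x \<in> canon_N x" using Gamma_C[OF assms] unfolding canon_defs by blast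
  then show "x \<in> canon_E (Sg x)" using Gamma_Single[OF assms] unfolding canon_defs by blast
  show "canon_R (Sg x) a" if "a \<in> canon_N x" for a
    using that Gamma_C[OF assms] unfolding canon_defs by blast
  fix y assume "y \<in> canon_E (Sg x)"
  then have y: "Mem y (Sg x) \<in> Gamma" unfolding canon_defs by simp
  show "canon_V y = canon_V x"
    using Gamma_Repl[OF assms y, of "AkLab p" for p] unfolding canon_defs by auto
  show "canon_N y = canon_N x"
    using Gamma_Repl[OF assms y, of "AkInN a" for a] unfolding canon_defs by auto
qed

lemma canonical_model: "nbhd_model L canon_V canon_N canon_E canon_R"
proof
  show "canon_R a a" for a unfolding canon_defs by (rule Gamma_Sub_refl)
  show "canon_R c b \<Longrightarrow> canon_R b a \<Longrightarrow> canon_R c a" for a b c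
    unfolding canon_defs by (rule Gamma_Sub_trans)
  show "canon_R c a \<Longrightarrow> canon_E c \<subseteq> canon_E a" for a c
    unfolding canon_defs using Gamma_Mem_Sub by blast
  show "\<exists>a\<in>canon_N x. canon_E a \<noteq> {}" if N: "hasN L" for x
  proof -
    obtain n where "InN (NV n) x \<in> Gamma" using Gamma_N[OF N] by blast
    then show ?thesis using Gamma_0[OF N] unfolding canon_defs by blast
  qed
  show "\<exists>a\<in>canon_N x. x \<in> canon_E a" if "hasT L" for x
    using Gamma_T[OF that] unfolding canon_defs by blast
  show "hasW L \<Longrightarrow> a \<in> canon_N x \<Longrightarrow> x \<in> canon_E a" for a x
    unfolding canon_defs using Gamma_W by blast
  show "hasC L \<Longrightarrow> \<exists>s\<in>canon_N x. (\<forall>a\<in>canon_N x. canon_R s a) \<and> x \<in> canon_E s \<and>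
      (\<forall>y\<in>canon_E s. canon_V y = canon_V x \<and> canon_N y = canon_N x)" for x
    by (rule canon_centered)
  show "hasU L \<Longrightarrow> a \<in> canon_N x \<Longrightarrow> y \<in> canon_E a \<Longrightarrow> b \<in> canon_N y \<Longrightarrow>
      z \<in> canon_E b \<Longrightarrow> \<exists>c\<in>canon_N x. z \<in> canon_E c" for a b x y z
    unfolding canon_defs using Gamma_U1 by blast
  show "hasU L \<Longrightarrow> a \<in> canon_N x \<Longrightarrow> y \<in> canon_E a \<Longrightarrow> b \<in> canon_N x \<Longrightarrow>
      z \<in> canon_E b \<Longrightarrow> \<exists>c\<in>canon_N y. z \<in> canon_E c" for a b x y z
    unfolding canon_defs using Gamma_U2 by blast
  show "hasA L \<Longrightarrow> a \<in> canon_N x \<Longrightarrow> y \<in> canon_E a \<Longrightarrow> canon_N y = canon_N x" for a x y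
    unfolding canon_defs using Gamma_A by blast
qed

abbreviation canon_sat :: "wlabel \<Rightarrow> form \<Rightarrow> bool" where
  "canon_sat \<equiv> holds canon_V canon_N canon_E canon_R"

definition truthful :: "form \<Rightarrow> bool" where
  "truthful A \<longleftrightarrow> (\<forall>y. (Lab y A \<in> Gamma \<longrightarrow> canon_sat y A) \<and> (Lab y A \<in> Delta \<longrightarrow> \<not> canon_sat y A))"

lemma truthfulI:
  "(\<And>y. Lab y A \<in> Gamma \<Longrightarrow> canon_sat y A) \<Longrightarrow> (\<And>y. Lab y A \<in> Delta \<Longrightarrow> \<not> canon_sat y A) \<Longrightarrow>
    truthful A"
  unfolding truthful_def by blast

lemma truthfulD:
  "truthful A \<Longrightarrow> Lab y A \<in> Gamma \<Longrightarrow> canon_sat y A"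
  "truthful A \<Longrightarrow> Lab y A \<in> Delta \<Longrightarrow> \<not> canon_sat y A"
  unfolding truthful_def by blast+

lemma truthful_Cond_Gamma:
  assumes A: "truthful A" and B: "truthful B" and "Lab x (Cond A B) \<in> Gamma"
  shows "canon_sat x (Cond A B)"
proof (unfold holds.simps(6), intro ballI impI)
  fix a assume "a \<in> canon_N x" "\<exists>y\<in>canon_E a. canon_sat y A"
  then obtain y where a: "InN a x \<in> Gamma" and y: "Mem y a \<in> Gamma" "canon_sat y A"
    unfolding canon_defs by blast
  have "FEx a A \<notin> Delta"
    using Delta_Ex[OF y(1)] truthfulD(2)[OF A] y(2) by blast
  then have "CondL x a A B \<in> Gamma" using Gamma_Cond[OF a assms(3)] by blast
  then obtain n where n: "InN (NV n) x \<in> Gamma" "Sub (NV n) a \<in> Gamma" "FEx (NV n) A \<in> Gamma"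
      "FAll (NV n) (Imp A B) \<in> Gamma"
    using Gamma_CondL by blast
  have "\<exists>y\<in>canon_E (NV n). canon_sat y A"
    using Gamma_Ex[OF n(3)] truthfulD(1)[OF A] unfolding canon_E_def by blast
  moreover have "canon_sat y A \<longrightarrow> canon_sat y B" if "y \<in> canon_E (NV n)" for y
  proof -
    have "Lab y (Imp A B) \<in> Gamma" using Gamma_All[OF _ n(4)] that unfolding canon_E_def by blast
    then show ?thesis using Gamma_Imp[of y A B] truthfulD(2)[OF A] truthfulD(1)[OF B] by blast
  qed
  ultimately show "\<exists>c\<in>canon_N x. canon_R c a \<and> (\<exists>y\<in>canon_E c. canon_sat y A) \<and>
      (\<forall>y\<in>canon_E c. canon_sat y A \<longrightarrow> canon_sat y B)"
    using n(1,2) unfolding canon_N_def canon_R_def by blast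
qed

lemma truthful_Cond_Delta:
  assumes A: "truthful A" and B: "truthful B" and "Lab x (Cond A B) \<in> Delta"
  shows "\<not> canon_sat x (Cond A B)"
proof
  obtain n where n: "InN (NV n) x \<in> Gamma" "FEx (NV n) A \<in> Gamma" "CondL x (NV n) A B \<in> Delta"
    using Delta_Cond[OF assms(3)] by blast
  have "\<exists>y\<in>canon_E (NV n). canon_sat y A"
    using Gamma_Ex[OF n(2)] truthfulD(1)[OF A] unfolding canon_E_def by blast
  moreover assume "canon_sat x (Cond A B)"
  ultimately obtain c where c: "InN c x \<in> Gamma" "Sub c (NV n) \<in> Gamma"
      "\<exists>y\<in>canon_E c. canon_sat y A" "\<forall>y\<in>canon_E c. canon_sat y A \<longrightarrow> canon_sat y B"
    using n(1) unfolding holds.simps(6) canon_N_def canon_R_def by blast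
  from Delta_CondL[OF c(1,2) n(3)] show False
  proof
    assume "FEx c A \<in> Delta"
    then show False
      using c(3) Delta_Ex truthfulD(2)[OF A] unfolding canon_E_def by blast
  next
    assume "FAll c (Imp A B) \<in> Delta"
    then obtain y where "Mem y c \<in> Gamma" "Lab y (Imp A B) \<in> Delta"
      using Delta_All by blast
    then show False
      using c(4) Delta_Imp[of y A B] truthfulD(1)[OF A] truthfulD(2)[OF B]
      unfolding canon_E_def by blast
  qed
qed

lemma truth_lemma: "truthful A"
proof (induction A)
  case (Atom p)
  show ?case by (rule truthfulI) (use Gamma_Delta_Atom in \<open>auto simp: canon_V_def\<close>)
next
  case Bot
  show ?case by (rule truthfulI) (use Gamma_Bot in auto)
next
  case (And A B)
  note IH = truthfulD[OF And.IH(1)] truthfulD[OF And.IH(2)]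
  show ?case
    by (rule truthfulI) (use IH Gamma_And[of _ A B] Delta_And[of _ A B] in force)+
next
  case (Or A B)
  note IH = truthfulD[OF Or.IH(1)] truthfulD[OF Or.IH(2)]
  show ?case
    by (rule truthfulI) (use IH Gamma_Or[of _ A B] Delta_Or[of _ A B] in force)+
next
  case (Imp A B)
  note IH = truthfulD[OF Imp.IH(1)] truthfulD[OF Imp.IH(2)]
  show ?case
    by (rule truthfulI) (use IH Gamma_Imp[of _ A B] Delta_Imp[of _ A B] in force)+
next
  case (Cond A B)
  show ?case
    by (rule truthfulI) (use Cond.IH truthful_Cond_Gamma truthful_Cond_Delta in blast)+
qed

end

theorem underivable_countermodel:
  assumes "\<not> deriv L G D"
  obtains V :: "wlabel \<Rightarrow> nat \<Rightarrow> bool" and N :: "wlabel \<Rightarrow> nlabel set" and E R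
  where "nbhd_model L V N E R"
    and "\<And>y A. Lab y A \<in># G \<Longrightarrow> holds V N E R y A"
    and "\<And>y A. Lab y A \<in># D \<Longrightarrow> \<not> holds V N E R y A"
proof -
  interpret failed_search L "(G, D)"
    using assms by unfold_locales simp
  have "set_mset G \<subseteq> Gamma" "set_mset D \<subseteq> Delta"
    unfolding Gamma_def Delta_def by (metis UN_upper UNIV_I fst_conv search.simps(1) snd_conv)+
  then show thesis
    using that[OF canonical_model] truth_lemma truthfulD by blast
qed

theorem mainTheorem13:
  fixes L :: logic and A :: form and x :: wlabel
  assumes "hderiv L A"
  shows "deriv L {#} {#Lab x A#}"
proof (rule ccontr)
  assume "\<not> deriv L {#} {#Lab x A#}"
  then show False
  proof (rule underivable_countermodel)
    fix V N E R
    assume "nbhd_model L V N E R" and "\<And>y B. Lab y B \<in># {#Lab x A#} \<Longrightarrow> \<not> holds V N E R y B"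
    then show False using nbhd_model.hderiv_sound assms by fastforce
  qed
qed

end
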